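(* Let $R$ be a commutative Noetherian ring of finite Krull dimension $d$ such that $R/\mathfrak{m}$ is infinite for every maximal ideal $\mathfrak{m}$ of $R$. Let $R[x_1,\ldots,x_n]$ be a polynomial ring over $R$ and $J \subseteq R[x_1,\ldots,x_n]$ an ideal with $\mathrm{height}(J) \geq d+1$. Then for every integer $0 \leq \ell \leq n$ there exist $r_1,\ldots,r_\ell \in R$ such that either $J + (x_1 - r_1, \ldots, x_\ell - r_\ell) = R[x_1,\ldots,x_n]$, or $\mathrm{height}(J + (x_1 - r_1,\ldots,x_\ell - r_\ell)) \geq d + \ell + 1$ (for $\ell = 0$ the ideal is understood to be $J$). *)

theory Defs
  imports Main "HOL-Library.Poly_Mapping" "HOL-Library.Extended_Nat"
begin

definition ideal_of :: "'b::comm_ring_1 set \<Rightarrow> 'b set \<Rightarrow> bool" where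
  "ideal_of S I \<longleftrightarrow> I \<subseteq> S \<and> 0 \<in> I \<and> (\<forall>a\<in>I. \<forall>b\<in>I. a + b \<in> I) \<and> (\<forall>a\<in>I. - a \<in> I)
     \<and> (\<forall>s\<in>S. \<forall>a\<in>I. s * a \<in> I)"

definition prime_ideal_of :: "'b::comm_ring_1 set \<Rightarrow> 'b set \<Rightarrow> bool" where
  "prime_ideal_of S P \<longleftrightarrow> ideal_of S P \<and> P \<noteq> S \<and> (\<forall>a\<in>S. \<forall>b\<in>S. a * b \<in> P \<longrightarrow> a \<in> P \<or> b \<in> P)"

definition maximal_ideal_of :: "'b::comm_ring_1 set \<Rightarrow> 'b set \<Rightarrow> bool" where
  "maximal_ideal_of S M \<longleftrightarrow> ideal_of S M \<and> M \<noteq> S \<and> (\<forall>I. ideal_of S I \<and> M \<subseteq> I \<longrightarrow> I = M \<or> I = S)"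

definition ideal_gen :: "'b::comm_ring_1 set \<Rightarrow> 'b set \<Rightarrow> 'b set" where
  "ideal_gen S X = \<Inter>{I. ideal_of S I \<and> X \<subseteq> I}"

definition noetherian_on :: "'b::comm_ring_1 set \<Rightarrow> bool" where
  "noetherian_on S \<longleftrightarrow> (\<forall>I. ideal_of S I \<longrightarrow> (\<exists>F. finite F \<and> F \<subseteq> I \<and> I = ideal_gen S F))"

definition prime_chain :: "'b::comm_ring_1 set \<Rightarrow> nat \<Rightarrow> (nat \<Rightarrow> 'b set) \<Rightarrow> bool" where
  "prime_chain S k f \<longleftrightarrow> (\<forall>i\<le>k. prime_ideal_of S (f i)) \<and> (\<forall>i<k. f i \<subset> f (Suc i))"

definition krull_dim :: "'b::comm_ring_1 set \<Rightarrow> enat" where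
  "krull_dim S = Sup {enat k | k. \<exists>f. prime_chain S k f}"

definition height_prime :: "'b::comm_ring_1 set \<Rightarrow> 'b set \<Rightarrow> enat" where
  "height_prime S P = Sup {enat k | k. \<exists>f. prime_chain S k f \<and> f k = P}"

text \<open>Height of an ideal: infimum of heights of primes containing it (= \<infinity> for the unit ideal).\<close>
definition ideal_height :: "'b::comm_ring_1 set \<Rightarrow> 'b set \<Rightarrow> enat" where
  "ideal_height S I = Inf {height_prime S P | P. prime_ideal_of S P \<and> I \<subseteq> P}"

text \<open>Polynomial ring R[x_1,...,x_n] inside the ring of finitely supported polynomials
  (monomials are finitely supported exponent vectors).\<close>
definition mpoly_ring :: "nat \<Rightarrow> ((nat \<Rightarrow>\<^sub>0 nat) \<Rightarrow>\<^sub>0 'a::comm_ring_1) set" where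
  "mpoly_ring n = {p. \<forall>m\<in>Poly_Mapping.keys p. Poly_Mapping.keys m \<subseteq> {1..n}}"

definition mvar :: "nat \<Rightarrow> (nat \<Rightarrow>\<^sub>0 nat) \<Rightarrow>\<^sub>0 'a::comm_ring_1" where
  "mvar i = Poly_Mapping.single (Poly_Mapping.single i 1) 1"

definition mconst :: "'a::comm_ring_1 \<Rightarrow> (nat \<Rightarrow>\<^sub>0 nat) \<Rightarrow>\<^sub>0 'a" where
  "mconst c = Poly_Mapping.single 0 c"

definition residue_cosets :: "'a::comm_ring_1 set \<Rightarrow> 'a set set" where
  "residue_cosets M = (\<lambda>a. {b. a - b \<in> M}) ` UNIV"

end

theory Submission
  imports Defs
begin

text \<open>Induction on \<open>\<ell>\<close>. Suppose every prime over \<open>K = J + (x\<^sub>1 - r\<^sub>1, \<dots>, x\<^sub>\<ell> - r\<^sub>\<ell>)\<close> has height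
  \<open>\<ge> d + \<ell> + 1\<close>, and write \<open>x = x\<^bsub>\<ell>+1\<^esub>\<close>. By Hilbert's basis theorem \<open>K\<close> has finitely many minimal
  primes. A minimal prime \<open>P\<close> containing some \<open>x - c\<close> contains \<open>x - y\<close> exactly for \<open>y \<in> c + (P \<inter> R)\<close>,
  and \<open>R/(P \<inter> R)\<close> is infinite because a prime with finite quotient is maximal. Finitely many cosets of
  ideals of infinite index do not cover \<open>R\<close> (B. H. Neumann), so some \<open>r\<^bsub>\<ell>+1\<^esub>\<close> avoids the cosets coming
  from the minimal primes of height \<open>\<le> d + \<ell> + 1\<close>. Then every prime over \<open>K + (x - r\<^bsub>\<ell>+1\<^esub>)\<close> either
  contains a minimal prime of \<open>K\<close> of height \<open>\<ge> d + \<ell> + 2\<close> or strictly contains one of height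
  \<open>\<ge> d + \<ell> + 1\<close>.\<close>

section \<open>Subrings and ideals\<close>

definition subring_of :: "'b::comm_ring_1 set \<Rightarrow> bool" where
  "subring_of S \<longleftrightarrow> 0 \<in> S \<and> 1 \<in> S \<and> (\<forall>a\<in>S. \<forall>b\<in>S. a + b \<in> S \<and> a * b \<in> S \<and> -a \<in> S)"

lemma subringD:
  assumes "subring_of S"
  shows "0 \<in> S" "1 \<in> S" "a \<in> S \<Longrightarrow> b \<in> S \<Longrightarrow> a + b \<in> S"
    "a \<in> S \<Longrightarrow> b \<in> S \<Longrightarrow> a * b \<in> S" "a \<in> S \<Longrightarrow> -a \<in> S"
    "a \<in> S \<Longrightarrow> b \<in> S \<Longrightarrow> a - b \<in> S"
  using assms unfolding subring_of_def diff_conv_add_uminus by blast+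

lemma subring_UNIV: "subring_of UNIV"
  by (simp add: subring_of_def)

lemma subring_power: "subring_of S \<Longrightarrow> a \<in> S \<Longrightarrow> a ^ k \<in> S"
  by (induction k) (auto intro: subringD)

lemma subring_sum: "subring_of S \<Longrightarrow> (\<And>x. x \<in> A \<Longrightarrow> f x \<in> S) \<Longrightarrow> sum f A \<in> S"
  by (induction A rule: infinite_finite_induct) (auto intro: subringD)

lemma subring_prod_list: "subring_of S \<Longrightarrow> set xs \<subseteq> S \<Longrightarrow> prod_list xs \<in> S"
  by (induction xs) (auto intro: subringD)

lemma idealI:
  assumes "I \<subseteq> S" "0 \<in> I" "\<And>a b. a \<in> I \<Longrightarrow> b \<in> I \<Longrightarrow> a + b \<in> I" "\<And>a. a \<in> I \<Longrightarrow> -a \<in> I"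
    "\<And>s a. s \<in> S \<Longrightarrow> a \<in> I \<Longrightarrow> s * a \<in> I"
  shows "ideal_of S I"
  using assms unfolding ideal_of_def by blast

lemma idealD:
  assumes "ideal_of S I"
  shows "I \<subseteq> S" "0 \<in> I" "a \<in> I \<Longrightarrow> b \<in> I \<Longrightarrow> a + b \<in> I" "a \<in> I \<Longrightarrow> -a \<in> I"
    "s \<in> S \<Longrightarrow> a \<in> I \<Longrightarrow> s * a \<in> I"
    "s \<in> S \<Longrightarrow> a \<in> I \<Longrightarrow> a * s \<in> I"
    "a \<in> I \<Longrightarrow> b \<in> I \<Longrightarrow> a - b \<in> I"
  using assms unfolding ideal_of_def by (auto simp: mult.commute diff_conv_add_uminus simp del: add_uminus_conv_diff)

lemma ideal_sum: "ideal_of S I \<Longrightarrow> (\<And>x. x \<in> A \<Longrightarrow> f x \<in> I) \<Longrightarrow> sum f A \<in> I"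
  by (induction A rule: infinite_finite_induct) (auto intro: idealD)

lemma ideal_eq_carrier_if_one:
  assumes "ideal_of S I" "1 \<in> I"
  shows "I = S"
  using idealD(1)[OF assms(1)] idealD(5)[OF assms(1) _ assms(2)] by force

lemma ideal_of_carrier: "subring_of S \<Longrightarrow> ideal_of S S"
  by (intro idealI) (auto intro: subringD)

lemma ideal_of_Union_chain:
  assumes C: "C \<noteq> {}" "\<And>I. I \<in> C \<Longrightarrow> ideal_of S I"
    and chain: "\<And>I J. I \<in> C \<Longrightarrow> J \<in> C \<Longrightarrow> I \<subseteq> J \<or> J \<subseteq> I"
  shows "ideal_of S (\<Union>C)"
proof (rule idealI)
  show "\<Union>C \<subseteq> S" using C(2) idealD(1) by blast
  show "0 \<in> \<Union>C" using C idealD(2) by blast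
next
  fix a b assume "a \<in> \<Union>C" "b \<in> \<Union>C"
  then obtain I J where IJ: "I \<in> C" "J \<in> C" "a \<in> I" "b \<in> J" by blast
  then have "a + b \<in> I \<or> a + b \<in> J"
    using chain[OF IJ(1,2)] idealD(3)[OF C(2)[OF IJ(1)]] idealD(3)[OF C(2)[OF IJ(2)]] by blast
  then show "a + b \<in> \<Union>C" using IJ(1,2) by blast
next
  fix a assume "a \<in> \<Union>C"
  then show "-a \<in> \<Union>C" using C(2) idealD(4) by blast
next
  fix s a assume "s \<in> S" "a \<in> \<Union>C"
  then show "s * a \<in> \<Union>C" using C(2) idealD(5) by blast
qed

lemma ideal_gen_superset: "X \<subseteq> ideal_gen S X"
  unfolding ideal_gen_def by auto

lemma ideal_gen_least: "ideal_of S I \<Longrightarrow> X \<subseteq> I \<Longrightarrow> ideal_gen S X \<subseteq> I"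
  unfolding ideal_gen_def by auto

lemma ideal_of_ideal_gen:
  assumes "subring_of S" "X \<subseteq> S"
  shows "ideal_of S (ideal_gen S X)"
proof -
  let ?F = "{I. ideal_of S I \<and> X \<subseteq> I}"
  have "S \<in> ?F" using assms ideal_of_carrier by blast
  then show ?thesis unfolding ideal_gen_def
  proof (intro idealI)
    show "a + b \<in> \<Inter>?F" if "a \<in> \<Inter>?F" "b \<in> \<Inter>?F" for a b using that by (auto dest: idealD(3))
    show "- a \<in> \<Inter>?F" if "a \<in> \<Inter>?F" for a using that by (auto dest: idealD(4))
    show "s * a \<in> \<Inter>?F" if "s \<in> S" "a \<in> \<Inter>?F" for s a using that by (auto dest: idealD(5))
  qed (auto dest: idealD(2))
qed

lemma ideal_gen_finite_lincomb:
  assumes S: "subring_of S" and F: "finite F" "F \<subseteq> S" and x: "x \<in> ideal_gen S F"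
  shows "\<exists>c. (\<forall>f. c f \<in> S) \<and> x = (\<Sum>f\<in>F. c f * f)"
proof -
  define L where "L = {y. \<exists>c. (\<forall>f. c f \<in> S) \<and> y = (\<Sum>f\<in>F. c f * f)}"
  have "ideal_of S L"
  proof (rule idealI)
    show "L \<subseteq> S" using S F by (auto simp: L_def intro!: subring_sum subringD(4))
    show "0 \<in> L" unfolding L_def using S by (intro CollectI exI[of _ "\<lambda>_. 0"]) (auto intro: subringD)
  next
    fix a b assume "a \<in> L" "b \<in> L"
    then obtain ca cb where "\<forall>f. ca f \<in> S" "a = (\<Sum>f\<in>F. ca f * f)" "\<forall>f. cb f \<in> S" "b = (\<Sum>f\<in>F. cb f * f)"
      unfolding L_def by auto
    then show "a + b \<in> L" unfolding L_def using S
      by (intro CollectI exI[of _ "\<lambda>f. ca f + cb f"]) (auto simp: sum.distrib distrib_right intro: subringD)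
  next
    fix a assume "a \<in> L"
    then obtain ca where "\<forall>f. ca f \<in> S" "a = (\<Sum>f\<in>F. ca f * f)" unfolding L_def by auto
    then show "-a \<in> L" unfolding L_def using S
      by (intro CollectI exI[of _ "\<lambda>f. - ca f"]) (auto simp: sum_negf intro: subringD)
  next
    fix s a assume "s \<in> S" "a \<in> L"
    then obtain ca where "\<forall>f. ca f \<in> S" "a = (\<Sum>f\<in>F. ca f * f)" unfolding L_def by auto
    then show "s * a \<in> L" unfolding L_def using S \<open>s \<in> S\<close>
      by (intro CollectI exI[of _ "\<lambda>f. s * ca f"]) (auto simp: sum_distrib_left mult.assoc intro: subringD)
  qed
  moreover have "g \<in> L" if g: "g \<in> F" for g
    unfolding L_def
  proof (intro CollectI exI[of _ "\<lambda>f. if f = g then 1 else 0"] conjI)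
    show "\<forall>f. (if f = g then 1 else 0) \<in> S" using S by (auto intro: subringD)
    show "g = (\<Sum>f\<in>F. (if f = g then 1 else 0) * f)"
      using g F by (simp add: sum.delta if_distrib[of "\<lambda>c. c * _"] cong: if_cong)
  qed
  ultimately have "ideal_gen S F \<subseteq> L" by (intro ideal_gen_least) auto
  with x show ?thesis unfolding L_def by auto
qed

lemma ideal_gen_insert_eq:
  assumes S: "subring_of S" and I: "ideal_of S I" and a: "a \<in> S"
  shows "ideal_gen S (I \<union> {a}) = {m + s * a | m s. m \<in> I \<and> s \<in> S}" (is "_ = ?L")
proof
  have IS: "I \<subseteq> S" by (rule idealD(1)[OF I])
  have "ideal_of S ?L"
  proof (rule idealI)
    show "?L \<subseteq> S" using IS a by (auto intro!: subringD(3,4)[OF S])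
    show "0 \<in> ?L" using idealD(2)[OF I] subringD(1)[OF S] by force
  next
    fix x y assume "x \<in> ?L" "y \<in> ?L"
    then obtain m s m' s' where "m \<in> I" "s \<in> S" "x = m + s * a" "m' \<in> I" "s' \<in> S" "y = m' + s' * a"
      by auto
    moreover have "x + y = (m + m') + (s + s') * a" using calculation by (simp add: algebra_simps)
    ultimately show "x + y \<in> ?L" using idealD(3)[OF I] subringD(3)[OF S] by blast
  next
    fix x assume "x \<in> ?L"
    then obtain m s where "m \<in> I" "s \<in> S" "x = m + s * a" by auto
    moreover have "-x = (-m) + (-s) * a" using calculation by (simp add: algebra_simps)
    ultimately show "-x \<in> ?L" using idealD(4)[OF I] subringD(5)[OF S] by blast
  next
    fix t x assume "t \<in> S" "x \<in> ?L"
    then obtain m s where "m \<in> I" "s \<in> S" "x = m + s * a" by auto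
    moreover have "t * x = (t * m) + (t * s) * a" using calculation by (simp add: algebra_simps)
    ultimately show "t * x \<in> ?L" using \<open>t \<in> S\<close> idealD(5)[OF I] subringD(4)[OF S] by blast
  qed
  moreover have "I \<union> {a} \<subseteq> ?L"
  proof -
    have "m = m + 0 * a" "a = 0 + 1 * a" for m by simp_all
    then show ?thesis using idealD(2)[OF I] subringD(1,2)[OF S] by blast
  qed
  ultimately show "ideal_gen S (I \<union> {a}) \<subseteq> ?L" by (rule ideal_gen_least)
next
  have "I \<union> {a} \<subseteq> S" using idealD(1)[OF I] a by auto
  then have J: "ideal_of S (ideal_gen S (I \<union> {a}))" by (rule ideal_of_ideal_gen[OF S])
  have gen: "I \<union> {a} \<subseteq> ideal_gen S (I \<union> {a})" by (rule ideal_gen_superset)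
  show "?L \<subseteq> ideal_gen S (I \<union> {a})"
  proof clarify
    fix m s assume "m \<in> I" "s \<in> S"
    then show "m + s * a \<in> ideal_gen S (I \<union> {a})"
      using gen idealD(3)[OF J _ idealD(5)[OF J \<open>s \<in> S\<close>]] by blast
  qed
qed

lemma prime_idealD:
  assumes "prime_ideal_of S P"
  shows "ideal_of S P" "P \<subseteq> S" "P \<noteq> S"
    "a \<in> S \<Longrightarrow> b \<in> S \<Longrightarrow> a * b \<in> P \<Longrightarrow> a \<in> P \<or> b \<in> P"
proof -
  show "ideal_of S P" "P \<noteq> S" "a \<in> S \<Longrightarrow> b \<in> S \<Longrightarrow> a * b \<in> P \<Longrightarrow> a \<in> P \<or> b \<in> P"
    using assms unfolding prime_ideal_of_def by blast+
  show "P \<subseteq> S" using \<open>ideal_of S P\<close> by (rule idealD(1))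
qed

lemma one_notin_prime_ideal:
  assumes "prime_ideal_of S P"
  shows "1 \<notin> P"
  using ideal_eq_carrier_if_one[OF prime_idealD(1)[OF assms]] prime_idealD(3)[OF assms] by blast

lemma prod_list_notin_prime_ideal:
  assumes S: "subring_of S" and P: "prime_ideal_of S P"
  shows "set xs \<subseteq> S - P \<Longrightarrow> prod_list xs \<notin> P"
proof (induction xs)
  case Nil
  then show ?case using one_notin_prime_ideal[OF P] by simp
next
  case (Cons x xs)
  then have "x \<in> S" "x \<notin> P" "prod_list xs \<in> S" "prod_list xs \<notin> P"
    using subring_prod_list[OF S, of xs] by auto
  then show ?case using prime_idealD(4)[OF P] by auto
qed

lemma power_notin_prime_ideal:
  assumes P: "prime_ideal_of UNIV P" and a: "a \<notin> P"
  shows "a ^ k \<notin> P"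
proof (induction k)
  case (Suc k)
  have "a * a ^ k \<in> P \<Longrightarrow> a \<in> P \<or> a ^ k \<in> P" by (rule prime_idealD(4)[OF P]) simp_all
  then show ?case using a Suc.IH by auto
qed (use one_notin_prime_ideal[OF P] in simp)

section \<open>Minimal primes of an ideal in a Noetherian ring\<close>

text \<open>The product ideal \<open>P\<^sub>1 \<cdots> P\<^sub>k\<close> of the primes in \<open>Ps\<close> lies in \<open>I\<close>; since \<open>I\<close> is an ideal,
  it suffices to ask this of the products \<open>x\<^sub>1 \<cdots> x\<^sub>k\<close> with \<open>x\<^sub>i \<in> P\<^sub>i\<close>.\<close>
definition contains_prime_product :: "'b::comm_ring_1 set \<Rightarrow> 'b set \<Rightarrow> bool" where
  "contains_prime_product S I \<longleftrightarrow> (\<exists>Ps. (\<forall>P\<in>set Ps. prime_ideal_of S P \<and> I \<subseteq> P) \<and>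
      (\<forall>xs. list_all2 (\<in>) xs Ps \<longrightarrow> prod_list xs \<in> I))"

lemma contains_prime_product_carrier: "subring_of S \<Longrightarrow> contains_prime_product S S"
  unfolding contains_prime_product_def by (intro exI[of _ "[]"]) (auto intro: subringD)

lemma contains_prime_product_prime: "prime_ideal_of S P \<Longrightarrow> contains_prime_product S P"
  unfolding contains_prime_product_def
  by (intro exI[of _ "[P]"]) (auto simp: list_all2_Cons2)

lemma contains_prime_product_finite_primes:
  assumes S: "subring_of S" and I: "contains_prime_product S I"
  shows "\<exists>\<P>. finite \<P> \<and> (\<forall>P\<in>\<P>. prime_ideal_of S P \<and> I \<subseteq> P) \<and>
            (\<forall>Q. prime_ideal_of S Q \<and> I \<subseteq> Q \<longrightarrow> (\<exists>P\<in>\<P>. P \<subseteq> Q))"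
proof -
  obtain Ps where Ps: "\<forall>P\<in>set Ps. prime_ideal_of S P \<and> I \<subseteq> P"
    and prod: "\<And>xs. list_all2 (\<in>) xs Ps \<Longrightarrow> prod_list xs \<in> I"
    using I unfolding contains_prime_product_def by blast
  have "\<exists>P\<in>set Ps. P \<subseteq> Q" if Q: "prime_ideal_of S Q" "I \<subseteq> Q" for Q
  proof (rule ccontr)
    assume "\<not> (\<exists>P\<in>set Ps. P \<subseteq> Q)"
    then have "\<forall>P\<in>set Ps. \<exists>x. x \<in> P - Q" by blast
    then have "\<exists>xs. list_all2 (\<lambda>x P. x \<in> P - Q) xs Ps"
      by (induction Ps) (auto simp: list_all2_Cons2)
    then obtain xs where xs: "list_all2 (\<lambda>x P. x \<in> P - Q) xs Ps" ..
    then have "list_all2 (\<in>) xs Ps" by (rule list_all2_mono) simp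
    then have "prod_list xs \<in> Q" using prod Q(2) by blast
    moreover have "set xs \<subseteq> S - Q"
      using xs Ps by (induction rule: list_all2_induct) (auto dest: prime_idealD(2))
    ultimately show False using prod_list_notin_prime_ideal[OF S Q(1)] by blast
  qed
  then show ?thesis using Ps by (intro exI[of _ "set Ps"]) auto
qed

lemma ideal_gen_insert_mult_mem:
  assumes S: "subring_of S" and M: "ideal_of S M" and ab: "a \<in> S" "b \<in> S" "a * b \<in> M"
    and "u \<in> ideal_gen S (M \<union> {a})" "v \<in> ideal_gen S (M \<union> {b})"
  shows "u * v \<in> M"
proof -
  obtain m s where ms: "m \<in> M" "s \<in> S" "u = m + s * a"
    using assms(6) ideal_gen_insert_eq[OF S M ab(1)] by auto
  obtain m' t where mt: "m' \<in> M" "t \<in> S" "v = m' + t * b"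
    using assms(7) ideal_gen_insert_eq[OF S M ab(2)] by auto
  have "m' \<in> S" using mt(1) idealD(1)[OF M] by blast
  then have "v \<in> S" using mt(2,3) ab(2) subringD(3,4)[OF S] by simp
  have "m * v \<in> M" by (rule idealD(6)[OF M \<open>v \<in> S\<close> ms(1)])
  moreover have "(s * a) * m' \<in> M" by (rule idealD(5)[OF M subringD(4)[OF S ms(2) ab(1)] mt(1)])
  moreover have "(s * t) * (a * b) \<in> M" by (rule idealD(5)[OF M subringD(4)[OF S ms(2) mt(2)] ab(3)])
  moreover have "u * v = m * v + (s * a) * m' + (s * t) * (a * b)"
    using ms(3) mt(3) by (simp add: algebra_simps)
  ultimately show ?thesis using idealD(3)[OF M] by simp
qed

lemma contains_prime_product_of_split:
  assumes S: "subring_of S" and M: "ideal_of S M" and ab: "a \<in> S" "b \<in> S" "a * b \<in> M"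
    and Ma: "contains_prime_product S (ideal_gen S (M \<union> {a}))"
    and Mb: "contains_prime_product S (ideal_gen S (M \<union> {b}))"
  shows "contains_prime_product S M"
proof -
  obtain Pa where Pa: "\<forall>P\<in>set Pa. prime_ideal_of S P \<and> ideal_gen S (M \<union> {a}) \<subseteq> P"
    and prod_a: "\<And>xs. list_all2 (\<in>) xs Pa \<Longrightarrow> prod_list xs \<in> ideal_gen S (M \<union> {a})"
    using Ma unfolding contains_prime_product_def by blast
  obtain Pb where Pb: "\<forall>P\<in>set Pb. prime_ideal_of S P \<and> ideal_gen S (M \<union> {b}) \<subseteq> P"
    and prod_b: "\<And>xs. list_all2 (\<in>) xs Pb \<Longrightarrow> prod_list xs \<in> ideal_gen S (M \<union> {b})"
    using Mb unfolding contains_prime_product_def by blast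
  have "prime_ideal_of S P \<and> M \<subseteq> P" if "P \<in> set (Pa @ Pb)" for P
  proof -
    have "M \<subseteq> ideal_gen S (M \<union> {a})" "M \<subseteq> ideal_gen S (M \<union> {b})"
      using ideal_gen_superset by blast+
    moreover from that have "P \<in> set Pa \<or> P \<in> set Pb" by simp
    ultimately show ?thesis using Pa Pb by blast
  qed
  moreover have "prod_list xs \<in> M" if xs_in: "list_all2 (\<in>) xs (Pa @ Pb)" for xs
  proof -
    obtain us vs where xs: "xs = us @ vs" and us: "list_all2 (\<in>) us Pa" and vs: "list_all2 (\<in>) vs Pb"
      using xs_in unfolding list_all2_append2 by blast
    have "prod_list us * prod_list vs \<in> M"
      by (rule ideal_gen_insert_mult_mem[OF S M ab prod_a[OF us] prod_b[OF vs]])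
    then show ?thesis unfolding xs by simp
  qed
  ultimately show ?thesis unfolding contains_prime_product_def by blast
qed

lemma noetherian_maximal_element:
  assumes N: "noetherian_on S" and "I \<in> A" and A: "\<And>J. J \<in> A \<Longrightarrow> ideal_of S J"
  shows "\<exists>M\<in>A. \<forall>X\<in>A. M \<subseteq> X \<longrightarrow> X = M"
proof (rule Zorn_Lemma2, rule ballI)
  fix C assume C: "C \<in> chains A"
  show "\<exists>U\<in>A. \<forall>X\<in>C. X \<subseteq> U"
  proof (cases "C = {}")
    case True then show ?thesis using \<open>I \<in> A\<close> by auto
  next
    case False
    have CA: "C \<subseteq> A" using chainsD2[OF C] .
    have "ideal_of S (\<Union>C)"
    proof (rule ideal_of_Union_chain[OF False])
      show "ideal_of S I" if "I \<in> C" for I using CA that by (intro A) blast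
      show "I \<subseteq> J \<or> J \<subseteq> I" if "I \<in> C" "J \<in> C" for I J using chainsD[OF C that] .
    qed
    then obtain F where F: "finite F" "F \<subseteq> \<Union>C" "\<Union>C = ideal_gen S F"
      using N unfolding noetherian_on_def by (elim allE impE exE conjE)
    have "subset.chain A C" using C by (simp add: chains_alt_def)
    then obtain B where B: "B \<in> C" "F \<subseteq> B"
      using finite_subset_Union_chain[OF F(1,2) False] by blast
    have "ideal_of S B" using B(1) CA by (intro A) blast
    then have "\<Union>C \<subseteq> B" using F(3) ideal_gen_least B(2) by metis
    then show ?thesis using B CA by blast
  qed
qed

text \<open>Noetherian induction: a maximal ideal without a prime product would be prime.\<close>
lemma noetherian_contains_prime_product:
  assumes S: "subring_of S" and N: "noetherian_on S" and I: "ideal_of S I"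
  shows "contains_prime_product S I"
proof (rule ccontr)
  define A where "A = {J. ideal_of S J \<and> \<not> contains_prime_product S J}"
  assume "\<not> contains_prime_product S I"
  then have "I \<in> A" using I by (simp add: A_def)
  then obtain M where M: "M \<in> A" and max: "\<And>X. X \<in> A \<Longrightarrow> M \<subseteq> X \<Longrightarrow> X = M"
    using noetherian_maximal_element[OF N, of I A] unfolding A_def by blast
  have Mi: "ideal_of S M" and Mp: "\<not> contains_prime_product S M" using M by (auto simp: A_def)
  have "M \<noteq> S" "\<not> prime_ideal_of S M"
    using Mp contains_prime_product_carrier[OF S] contains_prime_product_prime by auto
  then obtain a b where ab: "a \<in> S" "b \<in> S" "a * b \<in> M" "a \<notin> M" "b \<notin> M"
    using Mi unfolding prime_ideal_of_def by blast
  have "contains_prime_product S (ideal_gen S (M \<union> {c}))" if "c \<in> S" "c \<notin> M" for c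
  proof -
    have "ideal_of S (ideal_gen S (M \<union> {c}))"
      using idealD(1)[OF Mi] that by (intro ideal_of_ideal_gen[OF S]) auto
    moreover have "M \<subseteq> ideal_gen S (M \<union> {c})" "ideal_gen S (M \<union> {c}) \<noteq> M"
      using ideal_gen_superset[of "M \<union> {c}" S] that by auto
    ultimately show ?thesis using max[of "ideal_gen S (M \<union> {c})"] unfolding A_def by blast
  qed
  then show False
    using contains_prime_product_of_split[OF S Mi ab(1-3)] ab(1,2,4,5) Mp by simp
qed

lemma noetherian_finite_minimal_primes:
  assumes "subring_of S" "noetherian_on S" "ideal_of S I"
  shows "\<exists>\<P>. finite \<P> \<and> (\<forall>P\<in>\<P>. prime_ideal_of S P \<and> I \<subseteq> P) \<and>
            (\<forall>Q. prime_ideal_of S Q \<and> I \<subseteq> Q \<longrightarrow> (\<exists>P\<in>\<P>. P \<subseteq> Q))"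
  by (rule contains_prime_product_finite_primes[OF assms(1) noetherian_contains_prime_product[OF assms]])

section \<open>Heights\<close>

lemma height_prime_ge_chain: "prime_chain S k f \<Longrightarrow> enat k \<le> height_prime S (f k)"
  unfolding height_prime_def by (rule Sup_upper) blast

lemma prime_chain_of_height:
  assumes P: "prime_ideal_of S P" and h: "enat h \<le> height_prime S P"
  shows "\<exists>k f. h \<le> k \<and> prime_chain S k f \<and> f k = P"
proof (cases h)
  case 0
  have "prime_chain S 0 (\<lambda>_. P)" using P by (simp add: prime_chain_def)
  then show ?thesis using 0 by blast
next
  case (Suc h')
  show ?thesis
  proof (rule ccontr)
    assume none: "\<not> ?thesis"
    have "x \<le> enat h'" if "x \<in> {enat k | k. \<exists>f. prime_chain S k f \<and> f k = P}" for x
      using that none Suc by (auto simp: not_less_eq_eq)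
    then have "height_prime S P \<le> enat h'" unfolding height_prime_def by (rule Sup_least)
    with h Suc show False by (metis order_trans enat_ord_simps(1) Suc_n_not_le_n)
  qed
qed

lemma height_prime_psubset:
  assumes P: "prime_ideal_of S P" and Q: "prime_ideal_of S Q" and PQ: "P \<subset> Q"
    and h: "enat h \<le> height_prime S P"
  shows "enat (Suc h) \<le> height_prime S Q"
proof -
  obtain k f where k: "h \<le> k" "prime_chain S k f" "f k = P" using prime_chain_of_height[OF P h] by blast
  define g where "g = f(Suc k := Q)"
  have "prime_chain S (Suc k) g"
    unfolding prime_chain_def
  proof (intro conjI allI impI)
    show "prime_ideal_of S (g i)" if "i \<le> Suc k" for i
      using that k(2) Q by (cases "i = Suc k") (auto simp: g_def prime_chain_def)
    show "g i \<subset> g (Suc i)" if "i < Suc k" for i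
      using that k(2,3) PQ by (cases "i = k") (auto simp: g_def prime_chain_def)
  qed
  then have "enat (Suc k) \<le> height_prime S Q" using height_prime_ge_chain by (fastforce simp: g_def)
  then show ?thesis using k(1) by (meson enat_ord_simps(1) Suc_le_mono order_trans)
qed

lemma height_prime_mono:
  assumes "prime_ideal_of S P" "prime_ideal_of S Q" "P \<subseteq> Q" "enat h \<le> height_prime S P"
  shows "enat h \<le> height_prime S Q"
proof (cases "P = Q")
  case False
  then have "enat (Suc h) \<le> height_prime S Q" using height_prime_psubset assms by blast
  then show ?thesis by (meson Suc_n_not_le_n enat_ord_simps(1) nle_le order_trans)
qed (use assms in simp)

lemma height_prime_ge_ideal_height:
  "enat h \<le> ideal_height S I \<Longrightarrow> prime_ideal_of S Q \<Longrightarrow> I \<subseteq> Q \<Longrightarrow> enat h \<le> height_prime S Q"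
  unfolding ideal_height_def by (rule order_trans, assumption, rule Inf_lower) blast

lemma ideal_height_geI:
  "(\<And>Q. prime_ideal_of S Q \<Longrightarrow> I \<subseteq> Q \<Longrightarrow> enat h \<le> height_prime S Q) \<Longrightarrow> enat h \<le> ideal_height S I"
  unfolding ideal_height_def by (rule Inf_greatest) blast

lemma ideal_height_insert_Suc:
  assumes cover: "\<And>Q. prime_ideal_of S Q \<Longrightarrow> ideal_gen S G \<subseteq> Q \<Longrightarrow> \<exists>P\<in>\<P>. P \<subseteq> Q"
    and \<P>: "\<And>P. P \<in> \<P> \<Longrightarrow> prime_ideal_of S P \<and> ideal_gen S G \<subseteq> P"
    and h: "enat h \<le> ideal_height S (ideal_gen S G)"
    and avoid: "\<And>P. P \<in> \<P> \<Longrightarrow> a \<in> P \<Longrightarrow> enat (Suc h) \<le> height_prime S P"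
  shows "enat (Suc h) \<le> ideal_height S (ideal_gen S (insert a G))"
proof (rule ideal_height_geI)
  fix Q assume Q: "prime_ideal_of S Q" "ideal_gen S (insert a G) \<subseteq> Q"
  then have "a \<in> Q" "G \<subseteq> Q" using ideal_gen_superset by blast+
  then have "ideal_gen S G \<subseteq> Q" using ideal_gen_least prime_idealD(1)[OF Q(1)] by blast
  then obtain P where P: "P \<in> \<P>" "P \<subseteq> Q" using cover Q(1) by blast
  show "enat (Suc h) \<le> height_prime S Q"
  proof (cases "a \<in> P")
    case True
    then show ?thesis using height_prime_mono \<P> P Q(1) avoid by blast
  next
    case False
    then have "P \<subset> Q" using P(2) \<open>a \<in> Q\<close> by blast
    moreover have "enat h \<le> height_prime S P" using height_prime_ge_ideal_height[OF h] \<P>[OF P(1)] by blast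
    ultimately show ?thesis using height_prime_psubset \<P>[OF P(1)] Q(1) by blast
  qed
qed

section \<open>Avoiding finitely many cosets\<close>

definition coset :: "'a::comm_ring_1 set \<Rightarrow> 'a \<Rightarrow> 'a set" where
  "coset H a = {b. a - b \<in> H}"

lemma residue_cosets_eq: "residue_cosets H = range (coset H)"
  unfolding residue_cosets_def coset_def by simp

lemma coset_eqI:
  assumes H: "ideal_of UNIV H" and "z \<in> coset H a" "z \<in> coset H b"
  shows "coset H a = coset H b"
proof -
  have "a - z \<in> H" "b - z \<in> H" using assms(2,3) by (simp_all add: coset_def)
  then have "(a - z) - (b - z) \<in> H" by (rule idealD(7)[OF H])
  then have ab: "a - b \<in> H" by simp
  show ?thesis
  proof (intro set_eqI iffI)
    fix w assume "w \<in> coset H a"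
    then have "a - w \<in> H" by (simp add: coset_def)
    then have "(a - w) - (a - b) \<in> H" by (rule idealD(7)[OF H _ ab])
    then show "w \<in> coset H b" by (simp add: coset_def)
  next
    fix w assume "w \<in> coset H b"
    then have "b - w \<in> H" by (simp add: coset_def)
    then have "(b - w) + (a - b) \<in> H" by (rule idealD(3)[OF H _ ab])
    then show "w \<in> coset H a" by (simp add: coset_def)
  qed
qed

text \<open>B. H. Neumann's lemma for ideals of infinite index, by induction on the number of distinct
  ideals. Pick a coset \<open>b + H\<^sub>0\<close> of the new ideal that is not among the given ones, and a point \<open>x\<close>
  avoiding the cosets of the other ideals together with their translates by \<open>b - a\<^sub>0\<close>, for all given
  cosets \<open>a\<^sub>0 + H\<^sub>0\<close>. If \<open>x\<close> lies in some \<open>a\<^sub>0 + H\<^sub>0\<close>, then \<open>x - a\<^sub>0 + b\<close> avoids everything.\<close>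
lemma finite_cosets_not_cover:
  fixes C :: "('a::comm_ring_1 \<times> 'a set) set"
  assumes "finite HH" "\<forall>H\<in>HH. ideal_of UNIV H \<and> infinite (residue_cosets H)"
    and "finite C" "snd ` C \<subseteq> HH"
  shows "\<exists>x. \<forall>(a, H)\<in>C. x \<notin> coset H a"
  using assms
proof (induction HH arbitrary: C rule: finite_induct)
  case empty
  then show ?case by auto
next
  case (insert H0 HH C)
  have H0: "ideal_of UNIV H0" "infinite (range (coset H0))"
    using insert.prems(1) by (auto simp: residue_cosets_eq)
  define C0 where "C0 = fst ` {p\<in>C. snd p = H0}"
  define C1 where "C1 = {p\<in>C. snd p \<noteq> H0}"
  have "finite C0" "finite C1" using insert.prems(2) by (simp_all add: C0_def C1_def)
  then have "\<not> range (coset H0) \<subseteq> coset H0 ` C0" using H0(2) finite_subset by blast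
  then obtain b where b: "coset H0 b \<notin> coset H0 ` C0" by auto
  define C' where "C' = C1 \<union> (\<lambda>(a0, (a, H)). (a0 - b + a, H)) ` (C0 \<times> C1)"
  have "finite C'" "snd ` C' \<subseteq> HH"
    using \<open>finite C0\<close> \<open>finite C1\<close> insert.prems(3) by (auto simp: C'_def C1_def)
  then obtain x where x: "\<forall>(a, H)\<in>C'. x \<notin> coset H a"
    using insert.IH insert.prems(1) by blast
  have C1_avoid: "x \<notin> coset H a" if "(a, H) \<in> C1" for a H
    using x that by (auto simp: C'_def)
  show ?case
  proof (cases "\<exists>a0\<in>C0. x \<in> coset H0 a0")
    case False
    then have "x \<notin> coset H a" if "(a, H) \<in> C" for a H
      using that C1_avoid by (cases "H = H0") (auto simp: C0_def C1_def image_iff)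
    then show ?thesis by blast
  next
    case True
    then obtain a0 where a0: "a0 \<in> C0" "a0 - x \<in> H0" by (auto simp: coset_def)
    define y where "y = x - a0 + b"
    have yb: "y \<in> coset H0 b" using a0 by (simp add: coset_def y_def algebra_simps)
    have "y \<notin> coset H a" if aH: "(a, H) \<in> C" for a H
    proof (cases "H = H0")
      case True
      then have "a \<in> C0" using aH by (force simp: C0_def)
      then show ?thesis using coset_eqI[OF H0(1) _ yb] b True by blast
    next
      case False
      then have "(a0 - b + a, H) \<in> C'" using a0(1) aH unfolding C'_def C1_def by force
      then have "x \<notin> coset H (a0 - b + a)" using x by blast
      then show ?thesis by (simp add: coset_def y_def algebra_simps)
    qed
    then show ?thesis by blast
  qed
qed

text \<open>A finite domain is a field: a power of \<open>a \<notin> P\<close> repeats modulo \<open>P\<close>, so \<open>1 - a\<^sup>k \<in> P\<close>.\<close>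
lemma maximal_if_finite_residue:
  assumes P: "prime_ideal_of (UNIV::'a::comm_ring_1 set) P" and fin: "finite (residue_cosets P)"
  shows "maximal_ideal_of UNIV P"
  unfolding maximal_ideal_of_def
proof (intro conjI allI impI)
  show PI: "ideal_of UNIV P" "P \<noteq> UNIV" using prime_idealD(1,3)[OF P] by blast+
  fix I assume I: "ideal_of UNIV I \<and> P \<subseteq> I"
  show "I = P \<or> I = UNIV"
  proof (cases "I = P")
    case False
    then obtain a where aI: "a \<in> I" and aP: "a \<notin> P" using I by auto
    have "finite (range (\<lambda>k::nat. coset P (a ^ k)))"
      using fin residue_cosets_eq by (metis finite_subset image_subset_iff rangeI)
    then have "\<not> inj (\<lambda>k::nat. coset P (a ^ k))" using finite_imageD infinite_UNIV_nat by blast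
    then obtain i j where ij: "i < j" "coset P (a ^ i) = coset P (a ^ j)"
      unfolding inj_def by (metis linorder_neqE_nat)
    then have "a ^ i - a ^ j \<in> P" using idealD(2)[OF PI(1)] by (auto simp: coset_def)
    moreover have "a ^ i - a ^ j = a ^ i * (1 - a ^ (j - i))"
      using ij(1) by (simp add: algebra_simps power_add[symmetric])
    ultimately have "1 - a ^ (j - i) \<in> P"
      using prime_idealD(4)[OF P, of "a ^ i" "1 - a ^ (j - i)"] power_notin_prime_ideal[OF P aP] by auto
    then have "1 - a ^ (j - i) \<in> I" using I by auto
    moreover have "a ^ (j - i) \<in> I"
      using idealD(5)[OF I[THEN conjunct1] _ aI, of "a ^ (j - i - 1)"] ij(1)
      by (metis Suc_diff_Suc diff_Suc_1 power_Suc2 zero_less_diff UNIV_I)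
    ultimately have "1 \<in> I" using idealD(3)[OF I[THEN conjunct1]] by fastforce
    then show ?thesis using ideal_eq_carrier_if_one I by blast
  qed simp
qed

section \<open>Hilbert's basis theorem\<close>

text \<open>\<open>T\<close> behaves like the polynomial ring \<open>S[x]\<close>: \<open>coef i f \<in> S\<close> is the coefficient of \<open>x\<^sup>i\<close> in \<open>f\<close>.\<close>
locale polynomial_extension =
  fixes S T :: "'b::comm_ring_1 set" and x :: 'b and coef :: "nat \<Rightarrow> 'b \<Rightarrow> 'b"
  assumes S: "subring_of S" and T: "subring_of T" and ST: "S \<subseteq> T" and x: "x \<in> T"
    and coef_in: "\<And>f i. f \<in> T \<Longrightarrow> coef i f \<in> S"
    and coef_add: "\<And>f g i. f \<in> T \<Longrightarrow> g \<in> T \<Longrightarrow> coef i (f + g) = coef i f + coef i g"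
    and coef_smult: "\<And>s f i. s \<in> S \<Longrightarrow> f \<in> T \<Longrightarrow> coef i (s * f) = s * coef i f"
    and coef_x_mult: "\<And>f i. f \<in> T \<Longrightarrow> coef i (x * f) = (if i = 0 then 0 else coef (i - 1) f)"
    and coef_eq_0_imp: "\<And>f. f \<in> T \<Longrightarrow> (\<forall>i. coef i f = 0) \<Longrightarrow> f = 0"
    and coef_eventually_0: "\<And>f. f \<in> T \<Longrightarrow> \<exists>N. \<forall>i\<ge>N. coef i f = 0"
begin

lemma coef_0: "coef i 0 = 0"
  using coef_add[OF subringD(1)[OF T] subringD(1)[OF T], of i] by simp

lemma coef_uminus: "f \<in> T \<Longrightarrow> coef i (- f) = - coef i f"
  using coef_add[OF _ subringD(5)[OF T], of f f i] by (simp add: coef_0 eq_neg_iff_add_eq_0 add.commute)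

lemma coef_diff: "f \<in> T \<Longrightarrow> g \<in> T \<Longrightarrow> coef i (f - g) = coef i f - coef i g"
  using coef_add[OF _ subringD(5)[OF T], of f g i] coef_uminus[of g i] by simp

lemma coef_sum:
  "finite G \<Longrightarrow> (\<And>g. g \<in> G \<Longrightarrow> h g \<in> T) \<Longrightarrow> coef i (sum h G) = (\<Sum>g\<in>G. coef i (h g))"
proof (induction G rule: finite_induct)
  case (insert a G)
  have "sum h G \<in> T" using insert by (intro subring_sum[OF T]) auto
  then show ?case using insert coef_add[of "h a" "sum h G" i] by simp
qed (simp add: coef_0)

lemma coef_x_power_mult: "f \<in> T \<Longrightarrow> coef i (x ^ m * f) = (if i < m then 0 else coef (i - m) f)"
proof (induction m arbitrary: i)
  case (Suc m)
  have "x ^ m * f \<in> T" using subringD(4)[OF T subring_power[OF T x] Suc.prems] .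
  then have "coef i (x ^ Suc m * f) = (if i = 0 then 0 else coef (i - 1) (x ^ m * f))"
    using coef_x_mult[of "x ^ m * f" i] by (simp add: mult.assoc)
  then show ?case using Suc.IH[OF Suc.prems, of "i - 1"] by auto
qed simp

lemma coef_shifted_lincomb:
  assumes G: "finite G" and w: "\<And>g. g \<in> G \<Longrightarrow> w g \<in> T \<and> (\<forall>i>k. coef i (w g) = 0)"
    and s: "\<And>g. s g \<in> S" and "k \<le> N" "N \<le> i"
  shows "coef i (\<Sum>g\<in>G. s g * (x ^ (N - k) * w g))
           = (if i = N then (\<Sum>g\<in>G. s g * coef k (w g)) else 0)"
proof -
  have xw: "x ^ (N - k) * w g \<in> T" if "g \<in> G" for g
    using subringD(4)[OF T subring_power[OF T x]] w[OF that] by blast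
  then have "s g * (x ^ (N - k) * w g) \<in> T" if "g \<in> G" for g
    using subringD(4)[OF T _ xw[OF that]] s ST by blast
  then have "coef i (\<Sum>g\<in>G. s g * (x ^ (N - k) * w g)) = (\<Sum>g\<in>G. s g * coef (i - (N - k)) (w g))"
    using assms(4,5) by (auto simp: coef_sum[OF G] coef_smult[OF s xw] coef_x_power_mult w intro!: sum.cong)
  also have "\<dots> = (if i = N then (\<Sum>g\<in>G. s g * coef k (w g)) else 0)"
    using assms(4,5) w by (auto intro!: sum.neutral)
  finally show ?thesis .
qed

definition leading_coeffs :: "'b set \<Rightarrow> nat \<Rightarrow> 'b set" where
  "leading_coeffs I k = {coef k f | f. f \<in> I \<and> (\<forall>i>k. coef i f = 0)}"

lemma leading_coeffsI: "f \<in> I \<Longrightarrow> \<forall>i>k. coef i f = 0 \<Longrightarrow> coef k f \<in> leading_coeffs I k"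
  unfolding leading_coeffs_def by blast

lemma leading_coeffsE:
  assumes "a \<in> leading_coeffs I k"
  obtains f where "f \<in> I" "\<forall>i>k. coef i f = 0" "a = coef k f"
  using assms unfolding leading_coeffs_def by blast

lemma leading_coeffs_ideal:
  assumes I: "ideal_of T I"
  shows "ideal_of S (leading_coeffs I k)"
proof (rule idealI)
  show "leading_coeffs I k \<subseteq> S"
  proof
    fix a assume "a \<in> leading_coeffs I k"
    then obtain f where "f \<in> I" "a = coef k f" by (rule leading_coeffsE)
    then show "a \<in> S" using coef_in idealD(1)[OF I] by blast
  qed
  show "0 \<in> leading_coeffs I k" using leading_coeffsI[OF idealD(2)[OF I]] by (simp add: coef_0)
next
  fix a b assume "a \<in> leading_coeffs I k" "b \<in> leading_coeffs I k"
  then obtain f g where f: "f \<in> I" "\<forall>i>k. coef i f = 0" "a = coef k f"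
    and g: "g \<in> I" "\<forall>i>k. coef i g = 0" "b = coef k g"
    by (elim leading_coeffsE)
  have "coef i (f + g) = coef i f + coef i g" for i using coef_add idealD(1)[OF I] f(1) g(1) by blast
  then show "a + b \<in> leading_coeffs I k"
    using leading_coeffsI[OF idealD(3)[OF I f(1) g(1)], of k] f g by simp
next
  fix a assume "a \<in> leading_coeffs I k"
  then obtain f where f: "f \<in> I" "\<forall>i>k. coef i f = 0" "a = coef k f" by (rule leading_coeffsE)
  have "coef i (- f) = - coef i f" for i using coef_uminus idealD(1)[OF I] f(1) by blast
  then show "- a \<in> leading_coeffs I k"
    using leading_coeffsI[OF idealD(4)[OF I f(1)], of k] f by simp
next
  fix s a assume s: "s \<in> S" and "a \<in> leading_coeffs I k"
  then obtain f where f: "f \<in> I" "\<forall>i>k. coef i f = 0" "a = coef k f" by (elim leading_coeffsE)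
  have "coef i (s * f) = s * coef i f" for i using coef_smult s idealD(1)[OF I] f(1) by blast
  moreover have "s * f \<in> I" using idealD(5)[OF I _ f(1)] ST s by blast
  ultimately show "s * a \<in> leading_coeffs I k"
    using leading_coeffsI[of "s * f" I k] f by simp
qed

lemma leading_coeffs_Suc:
  assumes I: "ideal_of T I"
  shows "leading_coeffs I k \<subseteq> leading_coeffs I (Suc k)"
proof
  fix a assume "a \<in> leading_coeffs I k"
  then obtain f where f: "f \<in> I" "\<forall>i>k. coef i f = 0" "a = coef k f" by (rule leading_coeffsE)
  have "coef i (x * f) = (if i = 0 then 0 else coef (i - 1) f)" for i
    using coef_x_mult idealD(1)[OF I] f(1) by blast
  then show "a \<in> leading_coeffs I (Suc k)"
    using leading_coeffsI[OF idealD(5)[OF I x f(1)], of "Suc k"] f by simp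
qed

lemma leading_coeffs_mono:
  assumes "ideal_of T I" "k \<le> k'"
  shows "leading_coeffs I k \<subseteq> leading_coeffs I k'"
  using assms(2) by (induction k' rule: dec_induct) (use leading_coeffs_Suc[OF assms(1)] in blast)+

lemma leading_coeffs_stable:
  assumes N: "noetherian_on S" and I: "ideal_of T I"
  shows "\<exists>D. \<forall>k. leading_coeffs I k \<subseteq> leading_coeffs I (min k D)"
proof -
  let ?L = "\<Union>k. leading_coeffs I k"
  have "ideal_of S ?L"
  proof (rule ideal_of_Union_chain)
    show "J \<subseteq> K \<or> K \<subseteq> J" if "J \<in> range (leading_coeffs I)" "K \<in> range (leading_coeffs I)" for J K
      using that leading_coeffs_mono[OF I] nat_le_linear by blast
  qed (use leading_coeffs_ideal[OF I] in auto)
  then obtain F where F: "finite F" "F \<subseteq> ?L" "?L = ideal_gen S F"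
    using N unfolding noetherian_on_def by (elim allE impE exE conjE)
  obtain kf where kf: "\<And>c. c \<in> F \<Longrightarrow> c \<in> leading_coeffs I (kf c)" using F(2) by (metis UN_E subsetD)
  define D where "D = Max (insert 0 (kf ` F))"
  have "F \<subseteq> leading_coeffs I D"
  proof
    fix c assume c: "c \<in> F"
    have "kf c \<le> D" unfolding D_def using F(1) c by (intro Max_ge) auto
    then show "c \<in> leading_coeffs I D" using leading_coeffs_mono[OF I] kf[OF c] by blast
  qed
  then have "?L \<subseteq> leading_coeffs I D"
    using F(3) ideal_gen_least[OF leading_coeffs_ideal[OF I]] by simp
  then show ?thesis by (intro exI[of _ D]) (auto simp: min_def)
qed

lemma ideal_subset_by_degree_reduction:
  assumes I: "ideal_of T I" and J: "ideal_of T J"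
    and reduce: "\<And>f N. f \<in> I \<Longrightarrow> \<forall>i>N. coef i f = 0 \<Longrightarrow>
                   \<exists>t\<in>I \<inter> J. \<forall>i\<ge>N. coef i (f - t) = 0"
  shows "I \<subseteq> J"
proof -
  have IT: "f \<in> I \<Longrightarrow> f \<in> T" for f using idealD(1)[OF I] by blast
  have "\<forall>f\<in>I. (\<forall>i\<ge>n. coef i f = 0) \<longrightarrow> f \<in> J" for n
  proof (induction n)
    case 0
    then show ?case using coef_eq_0_imp IT idealD(2)[OF J] by auto
  next
    case (Suc N)
    show ?case
    proof (intro ballI impI)
      fix f assume f: "f \<in> I" "\<forall>i\<ge>Suc N. coef i f = 0"
      then obtain t where t: "t \<in> I" "t \<in> J" "\<forall>i\<ge>N. coef i (f - t) = 0"
        using reduce[of f N] by (auto simp: Suc_le_eq)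
      then have "f - t \<in> J" using Suc.IH idealD(7)[OF I f(1) t(1)] by blast
      then have "(f - t) + t \<in> J" by (rule idealD(3)[OF J _ t(2)])
      then show "f \<in> J" by simp
    qed
  qed
  then show ?thesis using coef_eventually_0 IT by blast
qed

lemma cancel_leading_coeff:
  assumes I: "ideal_of T I" and J: "ideal_of T J" and G: "finite G" "G \<subseteq> S"
    and w: "\<And>g. g \<in> G \<Longrightarrow> w g \<in> I \<inter> J \<and> (\<forall>i>k. coef i (w g) = 0) \<and> coef k (w g) = g"
    and f: "f \<in> I" "\<forall>i>N. coef i f = 0" and "k \<le> N" and lc: "coef N f \<in> ideal_gen S G"
  shows "\<exists>t\<in>I \<inter> J. \<forall>i\<ge>N. coef i (f - t) = 0"
proof -
  have IT: "g \<in> I \<Longrightarrow> g \<in> T" for g using idealD(1)[OF I] by blast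
  obtain s where s: "\<And>g. s g \<in> S" "coef N f = (\<Sum>g\<in>G. s g * g)"
    using ideal_gen_finite_lincomb[OF S G lc] by blast
  define t where "t = (\<Sum>g\<in>G. s g * (x ^ (N - k) * w g))"
  have t: "t \<in> I \<inter> J"
    unfolding t_def
  proof (intro IntI ideal_sum[OF I] ideal_sum[OF J])
    fix g assume g: "g \<in> G"
    have sT: "s g \<in> T" "x ^ (N - k) \<in> T" using s(1) ST subring_power[OF T x] by blast+
    show "s g * (x ^ (N - k) * w g) \<in> J"
      using idealD(5)[OF J sT(1) idealD(5)[OF J sT(2)]] w[OF g] by blast
    show "s g * (x ^ (N - k) * w g) \<in> I"
      using idealD(5)[OF I sT(1) idealD(5)[OF I sT(2)]] w[OF g] by blast
  qed
  have "coef i (f - t) = 0" if "N \<le> i" for i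
  proof -
    have "coef i t = (if i = N then (\<Sum>g\<in>G. s g * coef k (w g)) else 0)"
      unfolding t_def using w IT \<open>k \<le> N\<close> that by (intro coef_shifted_lincomb[OF G(1) _ s(1)]) auto
    also have "\<dots> = (if i = N then coef N f else 0)" using w s(2) by simp
    finally have "coef i t = (if i = N then coef N f else 0)" .
    moreover have "t \<in> T" using t IT by blast
    ultimately show ?thesis using coef_diff[OF IT[OF f(1)]] f(2) that by (cases "i = N") auto
  qed
  then show ?thesis using t by blast
qed

theorem noetherian_extension:
  assumes N: "noetherian_on S"
  shows "noetherian_on T"
  unfolding noetherian_on_def
proof (intro allI impI)
  fix I assume I: "ideal_of T I"
  obtain D where D: "\<And>k. leading_coeffs I k \<subseteq> leading_coeffs I (min k D)"
    using leading_coeffs_stable[OF N I] by blast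
  have "\<forall>k. \<exists>G. finite G \<and> G \<subseteq> leading_coeffs I k \<and> leading_coeffs I k = ideal_gen S G"
    using N leading_coeffs_ideal[OF I] unfolding noetherian_on_def by blast
  then obtain G where G: "\<And>k. finite (G k)" "\<And>k. G k \<subseteq> leading_coeffs I k"
    "\<And>k. leading_coeffs I k = ideal_gen S (G k)"
    by metis
  have "\<forall>k. \<forall>g\<in>G k. \<exists>f. f \<in> I \<and> (\<forall>i>k. coef i f = 0) \<and> coef k f = g"
    using G(2) unfolding leading_coeffs_def by blast
  then obtain w where w: "\<And>k g. g \<in> G k \<Longrightarrow> w k g \<in> I \<and> (\<forall>i>k. coef i (w k g) = 0) \<and> coef k (w k g) = g"
    by metis
  define W where "W = (\<Union>k\<le>D. w k ` G k)"
  have W: "finite W" "W \<subseteq> I" unfolding W_def using G(1) w by auto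
  have gen: "ideal_of T (ideal_gen T W)"
    using W(2) idealD(1)[OF I] by (intro ideal_of_ideal_gen[OF T]) auto
  have "I \<subseteq> ideal_gen T W"
  proof (rule ideal_subset_by_degree_reduction[OF I gen])
    fix f N assume f: "f \<in> I" "\<forall>i>N. coef i f = 0"
    define k where "k = min N D"
    have "coef N f \<in> ideal_gen S (G k)"
      using leading_coeffsI[OF f] D[of N] G(3)[of k] unfolding k_def by blast
    moreover have "G k \<subseteq> S" using G(2) leading_coeffs_ideal[OF I, THEN idealD(1)] by blast
    moreover have "w k g \<in> I \<inter> ideal_gen T W" if "g \<in> G k" for g
    proof -
      have "w k g \<in> W" using that unfolding W_def k_def by auto
      then show ?thesis using w[OF that] ideal_gen_superset[of W T] by blast
    qed
    ultimately show "\<exists>t\<in>I \<inter> ideal_gen T W. \<forall>i\<ge>N. coef i (f - t) = 0"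
      using w f by (intro cancel_leading_coeff[OF I gen G(1)[of k], where w = "w k" and k = k]) (auto simp: k_def)
  qed
  moreover have "ideal_gen T W \<subseteq> I" using ideal_gen_least[OF I W(2)] .
  ultimately show "\<exists>F. finite F \<and> F \<subseteq> I \<and> I = ideal_gen T F" using W by blast
qed

end

section \<open>Polynomial rings in finitely many variables\<close>

lemma keys_add_exponents: "Poly_Mapping.keys (a + b :: nat \<Rightarrow>\<^sub>0 nat) = Poly_Mapping.keys a \<union> Poly_Mapping.keys b"
  by (auto simp: in_keys_iff lookup_add)

lemma mem_mpoly_ring_iff: "p \<in> mpoly_ring n \<longleftrightarrow> (\<forall>m\<in>Poly_Mapping.keys p. Poly_Mapping.keys m \<subseteq> {1..n})"
  unfolding mpoly_ring_def by simp

lemma subring_mpoly_ring: "subring_of (mpoly_ring n :: ((nat \<Rightarrow>\<^sub>0 nat) \<Rightarrow>\<^sub>0 'a::comm_ring_1) set)"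
  unfolding subring_of_def
proof (intro conjI ballI)
  show "0 \<in> mpoly_ring n" by (simp add: mem_mpoly_ring_iff)
  show "1 \<in> mpoly_ring n" by (simp add: mem_mpoly_ring_iff)
  fix a b :: "(nat \<Rightarrow>\<^sub>0 nat) \<Rightarrow>\<^sub>0 'a" assume a: "a \<in> mpoly_ring n" and b: "b \<in> mpoly_ring n"
  show "a + b \<in> mpoly_ring n" using a b keys_add[of a b] by (auto simp: mem_mpoly_ring_iff)
  show "- a \<in> mpoly_ring n" using a by (simp add: mem_mpoly_ring_iff keys_def)
  show "a * b \<in> mpoly_ring n" unfolding mem_mpoly_ring_iff
  proof
    fix m assume "m \<in> Poly_Mapping.keys (a * b)"
    then obtain u w where "m = u + w" "u \<in> Poly_Mapping.keys a" "w \<in> Poly_Mapping.keys b"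
      using keys_mult[of a b] by blast
    then show "Poly_Mapping.keys m \<subseteq> {1..n}" using a b by (auto simp: mem_mpoly_ring_iff keys_add_exponents)
  qed
qed

lemma mpoly_ring_mono: "n \<le> n' \<Longrightarrow> mpoly_ring n \<subseteq> mpoly_ring n'"
proof
  fix p assume "n \<le> n'" "p \<in> mpoly_ring n"
  moreover have "{1..n} \<subseteq> {1..n'}" using \<open>n \<le> n'\<close> by auto
  ultimately show "p \<in> mpoly_ring n'" unfolding mpoly_ring_def by blast
qed

lemma mvar_in_mpoly_ring: "1 \<le> i \<Longrightarrow> i \<le> n \<Longrightarrow> mvar i \<in> mpoly_ring n"
  unfolding mpoly_ring_def mvar_def by simp

lemma mconst_in_mpoly_ring: "mconst c \<in> mpoly_ring n"
  unfolding mpoly_ring_def mconst_def by simp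

lemma Sum_any_when_add_eq:
  fixes a b :: "nat \<Rightarrow>\<^sub>0 nat"
  shows "Sum_any (\<lambda>q. (g q when b = a + q)) = (if (\<exists>q. b = a + q) then g (b - a) else 0)"
proof (cases "\<exists>q. b = a + q")
  case True
  have "(b = a + q) \<longleftrightarrow> (q = b - a)" for q using True by auto
  then show ?thesis using True by simp
next
  case False
  then show ?thesis by simp
qed

lemma lookup_single_mult:
  fixes p :: "(nat \<Rightarrow>\<^sub>0 nat) \<Rightarrow>\<^sub>0 'a::comm_ring_1"
  shows "Poly_Mapping.lookup (Poly_Mapping.single e c * p) m = (if (\<exists>q. m = e + q) then c * Poly_Mapping.lookup p (m - e) else 0)"
proof -
  have "Poly_Mapping.lookup (Poly_Mapping.single e c * p) m =
      Sum_any (\<lambda>l. Poly_Mapping.lookup (Poly_Mapping.single e c) l * Sum_any (\<lambda>q. Poly_Mapping.lookup p q when m = l + q))"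
    by (rule Poly_Mapping.lookup_mult)
  also have "\<dots> = Sum_any (\<lambda>l. (c * Sum_any (\<lambda>q. Poly_Mapping.lookup p q when m = l + q)) when e = l)"
    by (simp add: lookup_single when_mult)
  also have "\<dots> = c * Sum_any (\<lambda>q. Poly_Mapping.lookup p q when m = e + q)" by simp
  also have "\<dots> = (if (\<exists>q. m = e + q) then c * Poly_Mapping.lookup p (m - e) else 0)"
    by (simp add: Sum_any_when_add_eq)
  finally show ?thesis .
qed

lemma ex_add_iff_lookup_le:
  fixes a b :: "nat \<Rightarrow>\<^sub>0 nat"
  shows "(\<exists>q. b = a + q) \<longleftrightarrow> (\<forall>k. Poly_Mapping.lookup a k \<le> Poly_Mapping.lookup b k)"
proof
  assume "\<exists>q. b = a + q"
  then show "\<forall>k. Poly_Mapping.lookup a k \<le> Poly_Mapping.lookup b k" by (auto simp: lookup_add)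
next
  assume h: "\<forall>k. Poly_Mapping.lookup a k \<le> Poly_Mapping.lookup b k"
  have "b = a + (b - a)" by (rule poly_mapping_eqI) (use h in \<open>simp add: lookup_add lookup_minus\<close>)
  then show "\<exists>q. b = a + q" by blast
qed

text \<open>Reading \<open>p\<close> as a polynomial in \<open>x\<^sub>v\<close> over the other variables, \<open>var_coeff v i p\<close> is its
  coefficient of \<open>x\<^sub>v\<^sup>i\<close>.\<close>
definition var_coeff :: "nat \<Rightarrow> nat \<Rightarrow> ((nat \<Rightarrow>\<^sub>0 nat) \<Rightarrow>\<^sub>0 'a) \<Rightarrow> ((nat \<Rightarrow>\<^sub>0 nat) \<Rightarrow>\<^sub>0 'a::comm_ring_1)" where
  "var_coeff v i p = Abs_poly_mapping (\<lambda>m. if Poly_Mapping.lookup m v = 0 then Poly_Mapping.lookup p (m + Poly_Mapping.single v i) else 0)"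

lemma lookup_var_coeff:
  "Poly_Mapping.lookup (var_coeff v i p) m = (if Poly_Mapping.lookup m v = 0 then Poly_Mapping.lookup p (m + Poly_Mapping.single v i) else 0)"
proof -
  let ?f = "\<lambda>m. if Poly_Mapping.lookup m v = 0 then Poly_Mapping.lookup p (m + Poly_Mapping.single v i) else 0"
  have inj: "inj (\<lambda>m::nat \<Rightarrow>\<^sub>0 nat. m + Poly_Mapping.single v i)" by (rule injI) simp
  have "{m. ?f m \<noteq> 0} \<subseteq> (\<lambda>m. m + Poly_Mapping.single v i) -` Poly_Mapping.keys p"
    by (auto simp: in_keys_iff split: if_splits)
  moreover have "finite ((\<lambda>m. m + Poly_Mapping.single v i) -` Poly_Mapping.keys p)"
    by (rule finite_vimageI[OF finite_keys inj])
  ultimately have "finite {m. ?f m \<noteq> 0}" by (rule finite_subset)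
  then show ?thesis unfolding var_coeff_def by simp
qed

lemma lookup_mvar_mult:
  "Poly_Mapping.lookup (mvar v * f) m = (if (\<exists>q. m = Poly_Mapping.single v 1 + q) then Poly_Mapping.lookup f (m - Poly_Mapping.single v 1) else 0)"
  unfolding mvar_def by (simp add: lookup_single_mult)

lemma var_coeff_mvar_mult:
  "var_coeff v i (mvar v * f) = (if i = 0 then 0 else var_coeff v (i - 1) f)"
proof (rule poly_mapping_eqI)
  fix m
  show "Poly_Mapping.lookup (var_coeff v i (mvar v * f)) m = Poly_Mapping.lookup (if i = 0 then 0 else var_coeff v (i - 1) f) m"
  proof (cases "Poly_Mapping.lookup m v = 0")
    case False then show ?thesis by (simp add: lookup_var_coeff)
  next
    case mv: True
    show ?thesis
    proof (cases "i = 0")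
      case True
      have "\<not> (\<exists>q. m = Poly_Mapping.single v 1 + q)"
      proof
        assume "\<exists>q. m = Poly_Mapping.single v 1 + q"
        then obtain q where "m = Poly_Mapping.single v 1 + q" by blast
        then have "Poly_Mapping.lookup m v = 1 + Poly_Mapping.lookup q v" by (simp add: lookup_add)
        with mv show False by simp
      qed
      then show ?thesis using True mv by (simp add: lookup_var_coeff lookup_mvar_mult)
    next
      case False
      have eq: "m + Poly_Mapping.single v i = Poly_Mapping.single v 1 + (m + Poly_Mapping.single v (i - 1))"
      proof -
        have "Poly_Mapping.single v i = Poly_Mapping.single v 1 + Poly_Mapping.single v (i - 1)"
          using False by (simp add: single_add[symmetric])
        then show ?thesis by (simp add: ac_simps)
      qed
      show ?thesis using False mv
        by (simp add: lookup_var_coeff lookup_mvar_mult eq del: single_add)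
    qed
  qed
qed

lemma var_coeff_add: "var_coeff v i (f + g) = var_coeff v i f + var_coeff v i g"
  by (rule poly_mapping_eqI) (simp add: lookup_var_coeff lookup_add)

lemma var_coeff_eq_0_imp:
  fixes f :: "(nat \<Rightarrow>\<^sub>0 nat) \<Rightarrow>\<^sub>0 'a::comm_ring_1"
  assumes "\<forall>i. var_coeff v i f = 0"
  shows "f = 0"
proof (rule poly_mapping_eqI)
  fix m :: "nat \<Rightarrow>\<^sub>0 nat"
  define i where "i = Poly_Mapping.lookup m v"
  define m' where "m' = m - Poly_Mapping.single v i"
  have m'v: "Poly_Mapping.lookup m' v = 0" by (simp add: m'_def i_def lookup_minus)
  have "m' + Poly_Mapping.single v i = m"
    by (rule poly_mapping_eqI) (simp add: m'_def i_def lookup_minus lookup_add lookup_single when_def)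
  then have "Poly_Mapping.lookup (var_coeff v i f) m' = Poly_Mapping.lookup f m" using m'v by (simp add: lookup_var_coeff)
  then show "Poly_Mapping.lookup f m = Poly_Mapping.lookup 0 m" using assms by simp
qed

lemma var_coeff_eventually_0:
  fixes f :: "(nat \<Rightarrow>\<^sub>0 nat) \<Rightarrow>\<^sub>0 'a::comm_ring_1"
  shows "\<exists>N. \<forall>i\<ge>N. var_coeff v i f = 0"
proof -
  define N where "N = Suc (Max (insert 0 ((\<lambda>m. Poly_Mapping.lookup m v) ` Poly_Mapping.keys f)))"
  have "var_coeff v i f = 0" if "i \<ge> N" for i
  proof (rule poly_mapping_eqI)
    fix m
    show "Poly_Mapping.lookup (var_coeff v i f) m = Poly_Mapping.lookup 0 m"
    proof (cases "m + Poly_Mapping.single v i \<in> Poly_Mapping.keys f")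
      case True
      then have "Poly_Mapping.lookup (m + Poly_Mapping.single v i) v < N"
        unfolding N_def by (simp add: le_imp_less_Suc del: lookup_add)
      moreover have "Poly_Mapping.lookup (m + Poly_Mapping.single v i) v \<ge> i" by (simp add: lookup_add)
      ultimately show ?thesis using that by simp
    next
      case False then show ?thesis by (simp add: lookup_var_coeff in_keys_iff)
    qed
  qed
  then show ?thesis by blast
qed

lemma var_coeff_in_mpoly_ring:
  assumes p: "p \<in> mpoly_ring (Suc n)"
  shows "var_coeff (Suc n) i p \<in> mpoly_ring n"
  unfolding mem_mpoly_ring_iff
proof
  fix m assume "m \<in> Poly_Mapping.keys (var_coeff (Suc n) i p)"
  then have m1: "Poly_Mapping.lookup m (Suc n) = 0" and m2: "m + Poly_Mapping.single (Suc n) i \<in> Poly_Mapping.keys p"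
    by (auto simp: lookup_var_coeff in_keys_iff split: if_splits)
  have "Poly_Mapping.keys m \<subseteq> {1..Suc n}" using p m2 keys_add_exponents[of m] unfolding mem_mpoly_ring_iff by blast
  moreover have "Suc n \<notin> Poly_Mapping.keys m" using m1 by (simp add: in_keys_iff)
  ultimately show "Poly_Mapping.keys m \<subseteq> {1..n}" by (auto simp: subset_iff) (metis atLeastAtMost_iff le_Suc_eq)
qed

lemma lookup_key_mpoly_ring:
  assumes "s \<in> mpoly_ring n" "l \<in> Poly_Mapping.keys s"
  shows "Poly_Mapping.lookup l (Suc n) = 0"
proof -
  have "Poly_Mapping.keys l \<subseteq> {1..n}" using assms unfolding mem_mpoly_ring_iff by blast
  then have "Suc n \<notin> Poly_Mapping.keys l" by auto
  then show ?thesis by (simp add: in_keys_iff)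
qed

lemma lookup_mult_eq:
  fixes s f :: "(nat \<Rightarrow>\<^sub>0 nat) \<Rightarrow>\<^sub>0 'a::comm_ring_1"
  shows "Poly_Mapping.lookup (s * f) m = Sum_any (\<lambda>l. Poly_Mapping.lookup s l *
     (if (\<exists>q. m = l + q) then Poly_Mapping.lookup f (m - l) else 0))"
  by (simp add: Poly_Mapping.lookup_mult Sum_any_when_add_eq)

lemma ex_add_single_iff:
  fixes l m :: "nat \<Rightarrow>\<^sub>0 nat"
  assumes lv: "Poly_Mapping.lookup l v = 0"
  shows "(\<exists>q. m + Poly_Mapping.single v i = l + q) \<longleftrightarrow> (\<exists>q. m = l + q)"
  unfolding ex_add_iff_lookup_le
proof (intro iffI allI)
  fix k assume h: "\<forall>k. Poly_Mapping.lookup l k \<le> Poly_Mapping.lookup (m + Poly_Mapping.single v i) k"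
  show "Poly_Mapping.lookup l k \<le> Poly_Mapping.lookup m k"
    using lv h[rule_format, of k] by (cases "k = v") (simp_all add: lookup_add lookup_single)
qed (simp add: lookup_add add_increasing2)

lemma add_single_minus_eq:
  fixes l m :: "nat \<Rightarrow>\<^sub>0 nat"
  assumes "\<exists>q. m = l + q"
  shows "m + Poly_Mapping.single v i - l = m - l + Poly_Mapping.single v i"
  using assms by (intro poly_mapping_eqI) (auto simp: lookup_add lookup_minus)

lemma var_coeff_smult:
  fixes s f :: "(nat \<Rightarrow>\<^sub>0 nat) \<Rightarrow>\<^sub>0 'a::comm_ring_1"
  assumes s: "s \<in> mpoly_ring n"
  shows "var_coeff (Suc n) i (s * f) = s * var_coeff (Suc n) i f"
proof (rule poly_mapping_eqI)
  fix m :: "nat \<Rightarrow>\<^sub>0 nat"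
  let ?v = "Suc n" and ?e = "Poly_Mapping.single (Suc n) i"
  have lv: "Poly_Mapping.lookup l ?v = 0" if "l \<in> Poly_Mapping.keys s" for l
    by (rule lookup_key_mpoly_ring[OF s that])
  show "Poly_Mapping.lookup (var_coeff ?v i (s * f)) m = Poly_Mapping.lookup (s * var_coeff ?v i f) m"
  proof (cases "Poly_Mapping.lookup m ?v = 0")
    case mv: True
    have "Poly_Mapping.lookup s l * (if (\<exists>q. m + ?e = l + q) then Poly_Mapping.lookup f (m + ?e - l) else 0)
        = Poly_Mapping.lookup s l * (if (\<exists>q. m = l + q) then Poly_Mapping.lookup (var_coeff ?v i f) (m - l) else 0)" for l
    proof (cases "l \<in> Poly_Mapping.keys s")
      case True
      have "Poly_Mapping.lookup (m - l) ?v = 0" using mv by (simp add: lookup_minus)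
      then show ?thesis
        using ex_add_single_iff[OF lv[OF True]] add_single_minus_eq[of m l] by (simp add: lookup_var_coeff)
    qed (simp add: in_keys_iff)
    then show ?thesis using mv by (simp add: lookup_var_coeff lookup_mult_eq)
  next
    case mv: False
    have "Poly_Mapping.lookup s l * (if (\<exists>q. m = l + q) then Poly_Mapping.lookup (var_coeff ?v i f) (m - l) else 0) = 0" for l
    proof (cases "l \<in> Poly_Mapping.keys s")
      case True
      then have "Poly_Mapping.lookup (m - l) ?v \<noteq> 0" using lv mv by (simp add: lookup_minus)
      then show ?thesis by (simp add: lookup_var_coeff)
    qed (simp add: in_keys_iff)
    then show ?thesis using mv by (simp add: lookup_var_coeff lookup_mult_eq)
  qed
qed

lemma polynomial_extension_mpoly_ring: "polynomial_extension (mpoly_ring n) (mpoly_ring (Suc n)) (mvar (Suc n) :: (nat \<Rightarrow>\<^sub>0 nat) \<Rightarrow>\<^sub>0 'a::comm_ring_1) (var_coeff (Suc n))"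
proof
  show "subring_of (mpoly_ring n :: ((nat \<Rightarrow>\<^sub>0 nat) \<Rightarrow>\<^sub>0 'a) set)" by (rule subring_mpoly_ring)
  show "subring_of (mpoly_ring (Suc n) :: ((nat \<Rightarrow>\<^sub>0 nat) \<Rightarrow>\<^sub>0 'a) set)" by (rule subring_mpoly_ring)
  show "mpoly_ring n \<subseteq> mpoly_ring (Suc n)" by (rule mpoly_ring_mono) simp
  show "mvar (Suc n) \<in> mpoly_ring (Suc n)" by (rule mvar_in_mpoly_ring) auto
  show "\<And>f i. f \<in> mpoly_ring (Suc n) \<Longrightarrow> var_coeff (Suc n) i f \<in> mpoly_ring n" by (rule var_coeff_in_mpoly_ring)
  show "\<And>f g i. var_coeff (Suc n) i (f + g) = var_coeff (Suc n) i f + var_coeff (Suc n) i g" by (rule var_coeff_add)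
  show "\<And>s f i. s \<in> mpoly_ring n \<Longrightarrow> var_coeff (Suc n) i (s * f) = s * var_coeff (Suc n) i f" by (rule var_coeff_smult)
  show "\<And>f i. var_coeff (Suc n) i (mvar (Suc n) * f) = (if i = 0 then 0 else var_coeff (Suc n) (i - 1) f)" by (rule var_coeff_mvar_mult)
  show "\<And>f. \<forall>i. var_coeff (Suc n) i f = 0 \<Longrightarrow> f = 0" by (rule var_coeff_eq_0_imp)
  show "\<And>f. \<exists>N. \<forall>i\<ge>N. var_coeff (Suc n) i f = 0" by (rule var_coeff_eventually_0)
qed

lemma mpoly_ring_0_eq_mconst: "p \<in> mpoly_ring 0 \<Longrightarrow> p = mconst (Poly_Mapping.lookup p 0)"
  unfolding mconst_def
proof (rule poly_mapping_eqI)
  fix m assume p: "p \<in> mpoly_ring 0"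
  show "Poly_Mapping.lookup p m = Poly_Mapping.lookup (Poly_Mapping.single 0 (Poly_Mapping.lookup p 0)) m"
  proof (cases "m = 0")
    case True then show ?thesis by simp
  next
    case False
    have "m \<notin> Poly_Mapping.keys p"
    proof
      assume "m \<in> Poly_Mapping.keys p"
      then have "Poly_Mapping.keys m = {}" using p unfolding mem_mpoly_ring_iff by auto
      then show False using False by simp
    qed
    then show ?thesis using False by (simp add: in_keys_iff lookup_single)
  qed
qed

lemma mconst_add: "mconst a + mconst b = mconst (a + b)" by (simp add: mconst_def single_add)
lemma mconst_mult: "mconst a * mconst b = mconst (a * b)" by (simp add: mconst_def mult_single)
lemma mconst_uminus: "- mconst a = mconst (- a)" by (simp add: mconst_def single_uminus)
lemma mconst_diff: "mconst a - mconst b = mconst (a - b)" by (simp add: mconst_def single_diff)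
lemma mconst_0: "mconst 0 = 0" by (simp add: mconst_def)
lemma mconst_1: "mconst 1 = 1" by (simp add: mconst_def)
lemma mconst_sum: "mconst (sum f A) = (\<Sum>x\<in>A. mconst (f x))"
  by (induction A rule: infinite_finite_induct) (simp_all add: mconst_0 mconst_add[symmetric])

lemma ideal_contract_mconst:
  fixes I :: "((nat \<Rightarrow>\<^sub>0 nat) \<Rightarrow>\<^sub>0 'a::comm_ring_1) set"
  assumes I: "ideal_of (mpoly_ring n) I"
  shows "ideal_of (UNIV :: 'a set) {c. mconst c \<in> I}"
proof (rule idealI)
  show "0 \<in> {c. mconst c \<in> I}" using idealD(2)[OF I] by (simp add: mconst_0)
  show "a + b \<in> {c. mconst c \<in> I}" if "a \<in> {c. mconst c \<in> I}" "b \<in> {c. mconst c \<in> I}" for a b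
    using idealD(3)[OF I, of "mconst a" "mconst b"] that by (simp add: mconst_add)
  show "- a \<in> {c. mconst c \<in> I}" if "a \<in> {c. mconst c \<in> I}" for a
    using idealD(4)[OF I, of "mconst a"] that by (simp add: mconst_uminus)
  show "s * a \<in> {c. mconst c \<in> I}" if "a \<in> {c. mconst c \<in> I}" for s a
    using idealD(5)[OF I mconst_in_mpoly_ring[of s n], of "mconst a"] that by (simp add: mconst_mult)
qed simp

lemma prime_ideal_contract_mconst:
  fixes P :: "((nat \<Rightarrow>\<^sub>0 nat) \<Rightarrow>\<^sub>0 'a::comm_ring_1) set"
  assumes P: "prime_ideal_of (mpoly_ring n) P"
  shows "prime_ideal_of (UNIV :: 'a set) {a. mconst a \<in> P}"
  unfolding prime_ideal_of_def
proof (intro conjI ballI impI)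
  show "ideal_of UNIV {a. mconst a \<in> P}" by (rule ideal_contract_mconst[OF prime_idealD(1)[OF P]])
  have "mconst 1 \<notin> P" using one_notin_prime_ideal[OF P] by (simp add: mconst_1)
  then show "{a. mconst a \<in> P} \<noteq> UNIV" by blast
  fix a b :: 'a assume "a * b \<in> {a. mconst a \<in> P}"
  then show "a \<in> {a. mconst a \<in> P} \<or> b \<in> {a. mconst a \<in> P}"
    using prime_idealD(4)[OF P mconst_in_mpoly_ring mconst_in_mpoly_ring] by (simp add: mconst_mult)
qed

lemma noetherian_mpoly_ring_0:
  assumes N: "noetherian_on (UNIV :: 'a::comm_ring_1 set)"
  shows "noetherian_on (mpoly_ring 0 :: ((nat \<Rightarrow>\<^sub>0 nat) \<Rightarrow>\<^sub>0 'a) set)"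
  unfolding noetherian_on_def
proof (intro allI impI)
  fix I :: "((nat \<Rightarrow>\<^sub>0 nat) \<Rightarrow>\<^sub>0 'a) set" assume I: "ideal_of (mpoly_ring 0) I"
  have Sub: "subring_of (mpoly_ring 0 :: ((nat \<Rightarrow>\<^sub>0 nat) \<Rightarrow>\<^sub>0 'a) set)" by (rule subring_mpoly_ring)
  define J where "J = {c. mconst c \<in> I}"
  have J: "ideal_of UNIV J" unfolding J_def by (rule ideal_contract_mconst[OF I])
  obtain F where F: "finite F" "F \<subseteq> J" "J = ideal_gen UNIV F"
    using N[unfolded noetherian_on_def, rule_format, OF J] by (elim exE conjE) blast
  define W where "W = mconst ` F"
  have WI: "W \<subseteq> I" using F(2) by (auto simp: W_def J_def)
  have WS: "W \<subseteq> mpoly_ring 0" using WI idealD(1)[OF I] by blast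
  have GW: "ideal_of (mpoly_ring 0) (ideal_gen (mpoly_ring 0) W)" by (rule ideal_of_ideal_gen[OF Sub WS])
  have "I \<subseteq> ideal_gen (mpoly_ring 0) W"
  proof
    fix p assume pI: "p \<in> I"
    then have p0: "p \<in> mpoly_ring 0" using idealD(1)[OF I] by blast
    define c where "c = Poly_Mapping.lookup p 0"
    have p_eq: "p = mconst c" unfolding c_def by (rule mpoly_ring_0_eq_mconst[OF p0])
    then have "c \<in> J" using pI by (simp add: J_def)
    then have "c \<in> ideal_gen UNIV F" using F(3) by simp
    then obtain a where a: "c = (\<Sum>f\<in>F. a f * f)"
      using ideal_gen_finite_lincomb[OF subring_UNIV F(1)] by blast
    have "p = (\<Sum>f\<in>F. mconst (a f) * mconst f)" using p_eq a by (simp add: mconst_sum mconst_mult)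
    moreover have "(\<Sum>f\<in>F. mconst (a f) * mconst f) \<in> ideal_gen (mpoly_ring 0) W"
    proof (rule ideal_sum[OF GW])
      fix f assume "f \<in> F"
      then have "mconst f \<in> ideal_gen (mpoly_ring 0) W" using ideal_gen_superset[of W] by (auto simp: W_def)
      then show "mconst (a f) * mconst f \<in> ideal_gen (mpoly_ring 0) W" by (rule idealD(5)[OF GW mconst_in_mpoly_ring])
    qed
    ultimately show "p \<in> ideal_gen (mpoly_ring 0) W" by simp
  qed
  moreover have "ideal_gen (mpoly_ring 0) W \<subseteq> I" by (rule ideal_gen_least[OF I WI])
  ultimately show "\<exists>F. finite F \<and> F \<subseteq> I \<and> I = ideal_gen (mpoly_ring 0) F"
    using F(1) WI by (intro exI[of _ W]) (auto simp: W_def)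
qed

lemma noetherian_mpoly_ring:
  assumes N: "noetherian_on (UNIV :: 'a::comm_ring_1 set)"
  shows "noetherian_on (mpoly_ring n :: ((nat \<Rightarrow>\<^sub>0 nat) \<Rightarrow>\<^sub>0 'a) set)"
proof (induction n)
  case 0 then show ?case by (rule noetherian_mpoly_ring_0[OF N])
next
  case (Suc n)
  interpret polynomial_extension "mpoly_ring n" "mpoly_ring (Suc n)" "mvar (Suc n) :: (nat \<Rightarrow>\<^sub>0 nat) \<Rightarrow>\<^sub>0 'a" "var_coeff (Suc n)"
    by (rule polynomial_extension_mpoly_ring)
  show ?case by (rule noetherian_extension[OF Suc.IH])
qed

section \<open>Cutting down by the linear forms \<open>x\<^sub>i - r\<^sub>i\<close>\<close>

text \<open>If \<open>x - c \<in> P\<close>, then \<open>x - y \<in> P\<close> only for \<open>y\<close> in the coset of \<open>c\<close> modulo the contraction \<open>P \<inter> R\<close>;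
  all these cosets are of infinite index, so finitely many of them miss some \<open>y\<close>.\<close>
lemma exists_mconst_avoiding_primes:
  fixes x :: "(nat \<Rightarrow>\<^sub>0 nat) \<Rightarrow>\<^sub>0 'a::comm_ring_1"
  assumes B: "finite B" "\<And>P. P \<in> B \<Longrightarrow> prime_ideal_of (mpoly_ring n) P"
    and res_inf: "\<And>M. maximal_ideal_of (UNIV :: 'a set) M \<Longrightarrow> infinite (residue_cosets M)"
  shows "\<exists>y. \<forall>P\<in>B. x - mconst y \<notin> P"
proof -
  define contr where "contr P = {a. mconst a \<in> P}" for P :: "((nat \<Rightarrow>\<^sub>0 nat) \<Rightarrow>\<^sub>0 'a) set"
  define c where "c P = (SOME c. x - mconst c \<in> P)" for P :: "((nat \<Rightarrow>\<^sub>0 nat) \<Rightarrow>\<^sub>0 'a) set"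
  define C where "C = (\<lambda>P. (c P, contr P)) ` {P \<in> B. \<exists>c. x - mconst c \<in> P}"
  have "\<forall>H\<in>contr ` B. ideal_of UNIV H \<and> infinite (residue_cosets H)"
  proof
    fix H assume "H \<in> contr ` B"
    then obtain P where "P \<in> B" "H = contr P" by blast
    then have H: "prime_ideal_of UNIV H"
      using prime_ideal_contract_mconst[OF B(2)] unfolding contr_def by blast
    then show "ideal_of UNIV H \<and> infinite (residue_cosets H)"
      using prime_idealD(1)[OF H] maximal_if_finite_residue[OF H] res_inf by blast
  qed
  moreover have "finite C" using B(1) by (simp add: C_def)
  moreover have "snd ` C \<subseteq> contr ` B" by (auto simp: C_def)
  ultimately have "\<exists>y. \<forall>(a, H)\<in>C. y \<notin> coset H a"
    by (rule finite_cosets_not_cover[OF finite_imageI[OF B(1)]])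
  then obtain y where y: "\<forall>(a, H)\<in>C. y \<notin> coset H a" ..
  have "x - mconst y \<notin> P" if P: "P \<in> B" for P
  proof
    assume xy: "x - mconst y \<in> P"
    then have "x - mconst (c P) \<in> P" unfolding c_def by (rule someI)
    then have "(x - mconst y) - (x - mconst (c P)) \<in> P"
      by (rule idealD(7)[OF prime_idealD(1)[OF B(2)[OF P]] xy])
    then have "y \<in> coset (contr P) (c P)" by (simp add: coset_def contr_def mconst_diff)
    moreover have "(c P, contr P) \<in> C" unfolding C_def using P xy by blast
    ultimately show False using y by fast
  qed
  then show ?thesis by blast
qed

definition fibre_gens ::
  "((nat \<Rightarrow>\<^sub>0 nat) \<Rightarrow>\<^sub>0 'a::comm_ring_1) set \<Rightarrow> (nat \<Rightarrow> 'a) \<Rightarrow> nat \<Rightarrow> ((nat \<Rightarrow>\<^sub>0 nat) \<Rightarrow>\<^sub>0 'a) set" where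
  "fibre_gens J r l = J \<union> {mvar i - mconst (r i) | i. i \<in> {1..l}}"

lemma fibre_gens_0: "fibre_gens J r 0 = J"
  by (simp add: fibre_gens_def)

lemma fibre_gens_Suc:
  "fibre_gens J (r(Suc l := y)) (Suc l) = insert (mvar (Suc l) - mconst y) (fibre_gens J r l)"
proof -
  have "{1..Suc l} = insert (Suc l) {1..l}" by auto
  moreover have "(\<lambda>i. mvar i - mconst ((r(Suc l := y)) i)) ` {1..l} = (\<lambda>i. mvar i - mconst (r i)) ` {1..l}"
    by (rule image_cong) simp_all
  ultimately show ?thesis unfolding fibre_gens_def Setcompr_eq_image by simp
qed

lemma fibre_gens_subset:
  assumes "ideal_of (mpoly_ring n) J" "l \<le> n"
  shows "fibre_gens J r l \<subseteq> mpoly_ring n"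
proof -
  have "mvar i - mconst (r i) \<in> mpoly_ring n" if "1 \<le> i" "i \<le> l" for i
    using that assms(2) by (intro subringD(6)[OF subring_mpoly_ring] mvar_in_mpoly_ring mconst_in_mpoly_ring) auto
  then show ?thesis using idealD(1)[OF assms(1)] unfolding fibre_gens_def by auto
qed

lemma ideal_height_fibre_gens:
  fixes J :: "((nat \<Rightarrow>\<^sub>0 nat) \<Rightarrow>\<^sub>0 'a::comm_ring_1) set"
  assumes noeth: "noetherian_on (UNIV :: 'a set)"
    and res_inf: "\<And>M. maximal_ideal_of (UNIV :: 'a set) M \<Longrightarrow> infinite (residue_cosets M)"
    and J: "ideal_of (mpoly_ring n) J"
    and htJ: "enat (d + 1) \<le> ideal_height (mpoly_ring n) J"
  shows "l \<le> n \<Longrightarrow> \<exists>r :: nat \<Rightarrow> 'a.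
           enat (d + l + 1) \<le> ideal_height (mpoly_ring n) (ideal_gen (mpoly_ring n) (fibre_gens J r l))"
proof (induction l)
  case 0
  have "ideal_gen (mpoly_ring n) J = J"
    using ideal_gen_least[OF J] ideal_gen_superset[of J] by blast
  then show ?case using htJ by (simp add: fibre_gens_0)
next
  case (Suc l)
  let ?T = "mpoly_ring n :: ((nat \<Rightarrow>\<^sub>0 nat) \<Rightarrow>\<^sub>0 'a) set"
  obtain r where r: "enat (d + l + 1) \<le> ideal_height ?T (ideal_gen ?T (fibre_gens J r l))"
    using Suc by auto
  define K where "K = ideal_gen ?T (fibre_gens J r l)"
  have "ideal_of ?T K"
    unfolding K_def using Suc.prems by (intro ideal_of_ideal_gen subring_mpoly_ring fibre_gens_subset[OF J]) simp
  then obtain \<P> where \<P>: "finite \<P>" "\<And>P. P \<in> \<P> \<Longrightarrow> prime_ideal_of ?T P \<and> K \<subseteq> P"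
    and cover: "\<And>Q. prime_ideal_of ?T Q \<Longrightarrow> K \<subseteq> Q \<Longrightarrow> \<exists>P\<in>\<P>. P \<subseteq> Q"
    using noetherian_finite_minimal_primes[OF subring_mpoly_ring noetherian_mpoly_ring[OF noeth]] by metis
  define B where "B = {P \<in> \<P>. \<not> enat (Suc (d + l + 1)) \<le> height_prime ?T P}"
  obtain y where y: "\<And>P. P \<in> B \<Longrightarrow> mvar (Suc l) - mconst y \<notin> P"
    using exists_mconst_avoiding_primes[of B n "mvar (Suc l)"] \<P> res_inf unfolding B_def by auto
  have "enat (Suc (d + l + 1)) \<le> ideal_height ?T (ideal_gen ?T (insert (mvar (Suc l) - mconst y) (fibre_gens J r l)))"
    by (rule ideal_height_insert_Suc[OF cover[unfolded K_def] \<P>(2)[unfolded K_def] r])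
      (use y in \<open>auto simp: B_def\<close>)
  then have "enat (d + Suc l + 1) \<le> ideal_height ?T (ideal_gen ?T (fibre_gens J (r(Suc l := y)) (Suc l)))"
    unfolding fibre_gens_Suc by simp
  then show ?case by blast
qed

theorem lemma2p4:
  fixes d n l :: nat
    and J :: "((nat \<Rightarrow>\<^sub>0 nat) \<Rightarrow>\<^sub>0 'a::comm_ring_1) set"
  assumes noeth: "noetherian_on (UNIV :: 'a set)"
    and dim: "krull_dim (UNIV :: 'a set) = enat d"
    and res_inf: "\<And>M. maximal_ideal_of (UNIV :: 'a set) M \<Longrightarrow> infinite (residue_cosets M)"
    and J: "ideal_of (mpoly_ring n) J"
    and htJ: "ideal_height (mpoly_ring n) J \<ge> enat (d + 1)"
    and l: "l \<le> n"
  shows "\<exists>r :: nat \<Rightarrow> 'a.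
           (let K = ideal_gen (mpoly_ring n) (J \<union> {mvar i - mconst (r i) | i. i \<in> {1..l}})
            in K = mpoly_ring n \<or> ideal_height (mpoly_ring n) K \<ge> enat (d + l + 1))"
proof -
  obtain r :: "nat \<Rightarrow> 'a"
    where "enat (d + l + 1) \<le> ideal_height (mpoly_ring n) (ideal_gen (mpoly_ring n) (fibre_gens J r l))"
    using ideal_height_fibre_gens[OF noeth res_inf J htJ l] by blast
  then show ?thesis unfolding fibre_gens_def Let_def by (intro exI[of _ r] disjI2)
qed

end
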